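(* Let $n\ge2$ and $1\le w_n\le n-1$. For every $\delta>0$ there exist independent, non-identically distributed nonnegative rewards $X_1,\dots,X_n$ such that every algorithm in the window-access model with window size $w_n$, even one that observes the rewards exactly and knows their distributions, satisfies $$\frac{\mathbb{E}[X_\tau]}{\mathbb{E}[\max_{i\in[n]}X_i]}\le\frac12+\delta.$$
   Context: Window-access model with window size $w_n$: the rewards are revealed one at a time. At time $i$, the decision maker may stop and select any index in $\{\max(1,i-w_n+1),\dots,i\}$, receiving that index's reward $X_\tau$. Otherwise it proceeds to time $i+1$. If it never stops, the payoff is $0$. Decisions may depend only on the information revealed so far. *)

theory Defs
  imports "HOL-Probability.Probability"
begin

text \<open>Rewards are indexed by 1..n; a reward vector is a function
  x :: nat => real (only x 1, ..., x n matter). An algorithm is a (deterministic) decision rule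
  A i x :: nat option used at time i: None = continue, Some j = stop now and select index j.\<close>

definition window_alg :: "nat \<Rightarrow> nat \<Rightarrow> (nat \<Rightarrow> (nat \<Rightarrow> real) \<Rightarrow> nat option) \<Rightarrow> bool" where
  "window_alg n w A \<longleftrightarrow>
     (\<forall>i\<in>{1..n}. \<forall>x y. (\<forall>j\<in>{1..i}. x j = y j) \<longrightarrow> A i x = A i y) \<and>
     (\<forall>i\<in>{1..n}. \<forall>x j. A i x = Some j \<longrightarrow> j \<in> {max 1 (i + 1 - w)..i})"

definition stop_time :: "nat \<Rightarrow> (nat \<Rightarrow> (nat \<Rightarrow> real) \<Rightarrow> nat option) \<Rightarrow> (nat \<Rightarrow> real) \<Rightarrow> nat option" where
  "stop_time n A x =
     (if \<exists>i\<in>{1..n}. A i x \<noteq> None then Some (LEAST i. i \<in> {1..n} \<and> A i x \<noteq> None) else None)"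

definition payoff :: "nat \<Rightarrow> (nat \<Rightarrow> (nat \<Rightarrow> real) \<Rightarrow> nat option) \<Rightarrow> (nat \<Rightarrow> real) \<Rightarrow> real" where
  "payoff n A x = (case stop_time n A x of None \<Rightarrow> 0 | Some i \<Rightarrow> x (the (A i x)))"

end

theory Submission
  imports Defs
begin

text \<open>Let \<open>X\<^sub>1 = 1\<close> surely, let \<open>X\<^sub>w\<^sub>+\<^sub>1\<close> be \<open>1/p\<close> with probability \<open>p\<close> and \<open>0\<close> otherwise, and let
  all other rewards vanish. Up to time \<open>w\<close> the algorithm has only seen constants, so whether it
  stops by then is decided in advance. If it does, it selects an index \<open>\<le> w\<close> and gets at most 1;
  if it does not, \<open>X\<^sub>1\<close> has left the window and it gets at most \<open>X\<^sub>w\<^sub>+\<^sub>1\<close>, whose mean is 1.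
  Meanwhile \<open>E[max X\<^sub>i] = E[max 1 X\<^sub>w\<^sub>+\<^sub>1] = 2 - p\<close>, and \<open>p = min (1/2) \<delta>\<close> makes
  \<open>1/(2 - p) \<le> 1/2 + \<delta>\<close>.\<close>

lemma nn_integral_PiM_component:
  assumes "\<And>i. i \<in> I \<Longrightarrow> prob_space (M i)" "k \<in> I" "g \<in> borel_measurable (M k)"
  shows "(\<integral>\<^sup>+ x. g (x k) \<partial>PiM I M) = (\<integral>\<^sup>+ y. g y \<partial>M k)"
proof -
  have "(\<integral>\<^sup>+ x. g (x k) \<partial>PiM I M) = (\<integral>\<^sup>+ y. g y \<partial>distr (PiM I M) (M k) (\<lambda>x. x k))"
    using assms by (intro nn_integral_distr[symmetric]) auto
  then show ?thesis
    using distr_PiM_component[of I M k] assms by simp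
qed

lemma stop_time_SomeD:
  assumes "stop_time n A x = Some s"
  shows "s \<in> {1..n}" and "A s x \<noteq> None"
proof -
  have ex: "\<exists>i. i \<in> {1..n} \<and> A i x \<noteq> None"
    and s: "s = (LEAST i. i \<in> {1..n} \<and> A i x \<noteq> None)"
    using assms by (auto simp: stop_time_def split: if_splits)
  show "s \<in> {1..n}" "A s x \<noteq> None"
    using LeastI_ex[OF ex] unfolding s by auto
qed

lemma stop_time_le:
  assumes "i \<in> {1..n}" "A i x \<noteq> None"
  obtains s where "stop_time n A x = Some s" "s \<le> i"
proof (rule that)
  show "stop_time n A x = Some (LEAST i. i \<in> {1..n} \<and> A i x \<noteq> None)"
    using assms unfolding stop_time_def by auto
  show "(LEAST i. i \<in> {1..n} \<and> A i x \<noteq> None) \<le> i"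
    using assms by (intro Least_le) auto
qed

lemma window_alg_nonanticipating:
  assumes "window_alg n w A" "i \<in> {1..n}" "\<And>j. j \<in> {1..i} \<Longrightarrow> x j = y j"
  shows "A i x = A i y"
  using assms unfolding window_alg_def by blast

lemma window_alg_payoff_stop:
  assumes "window_alg n w A" "stop_time n A x = Some s"
  obtains j where "j \<in> {max 1 (s + 1 - w)..s}" "payoff n A x = x j"
proof -
  obtain j where j: "A s x = Some j"
    using stop_time_SomeD(2)[OF assms(2)] by blast
  have "j \<in> {max 1 (s + 1 - w)..s}"
    using assms(1) stop_time_SomeD(1)[OF assms(2)] j unfolding window_alg_def by blast
  moreover have "payoff n A x = x j"
    using assms(2) j by (simp add: payoff_def)
  ultimately show ?thesis by (rule that)
qed

lemma window_alg_payoff_early: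
  assumes "window_alg n w A" "i \<in> {1..n}" "A i x \<noteq> None"
  shows "\<exists>j\<in>{1..i}. payoff n A x = x j"
proof -
  obtain s where s: "stop_time n A x = Some s" "s \<le> i"
    using assms(2,3) by (rule stop_time_le)
  obtain j where "j \<in> {max 1 (s + 1 - w)..s}" "payoff n A x = x j"
    using window_alg_payoff_stop[OF assms(1) s(1)] .
  then show ?thesis using s(2) by auto
qed

lemma window_alg_payoff_late:
  assumes "window_alg n w A" "\<And>i. i \<in> {1..w} \<Longrightarrow> A i x = None"
  shows "payoff n A x = 0 \<or> (\<exists>j\<in>{2..n}. payoff n A x = x j)"
proof (cases "stop_time n A x")
  case None
  then show ?thesis by (simp add: payoff_def)
next
  case (Some s)
  have "s \<in> {1..n}" "A s x \<noteq> None"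
    using stop_time_SomeD[OF Some] by auto
  with assms(2) have "w < s" by force
  obtain j where "j \<in> {max 1 (s + 1 - w)..s}" "payoff n A x = x j"
    using window_alg_payoff_stop[OF assms(1) Some] .
  with \<open>w < s\<close> \<open>s \<in> {1..n}\<close> show ?thesis by auto
qed

definition bernoulli_reward :: "real \<Rightarrow> real \<Rightarrow> real measure" where
  "bernoulli_reward p M = distr (measure_pmf (bernoulli_pmf p)) borel (\<lambda>b. if b then M else 0)"

lemma prob_space_bernoulli_reward: "prob_space (bernoulli_reward p M)"
  unfolding bernoulli_reward_def
  by (intro prob_space.prob_space_distr) (auto simp: prob_space_measure_pmf)

lemma sets_bernoulli_reward: "sets (bernoulli_reward p M) = sets borel"
  by (simp add: bernoulli_reward_def)

lemma AE_bernoulli_reward: "AE y in bernoulli_reward p M. y = 0 \<or> y = M"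
  unfolding bernoulli_reward_def by (subst AE_distr_iff) (auto simp: AE_measure_pmf_iff)

lemma nn_integral_bernoulli_reward:
  assumes "0 \<le> p" "p \<le> 1" "g \<in> borel_measurable borel"
  shows "(\<integral>\<^sup>+ y. g y \<partial>bernoulli_reward p M) = g M * p + g 0 * (1 - p)"
  using assms unfolding bernoulli_reward_def by (subst nn_integral_distr) auto

definition certain_reward :: "nat \<Rightarrow> real" where
  "certain_reward j = (if j = 1 then 1 else 0)"

definition hard_rewards :: "nat \<Rightarrow> real \<Rightarrow> nat \<Rightarrow> real measure" where
  "hard_rewards w p j =
     (if j = Suc w then bernoulli_reward p (1 / p) else return borel (certain_reward j))"

lemma hard_rewards_last: "hard_rewards w p (Suc w) = bernoulli_reward p (1 / p)"
  by (simp add: hard_rewards_def)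

lemma hard_rewards_certain:
  "j \<noteq> Suc w \<Longrightarrow> hard_rewards w p j = return borel (certain_reward j)"
  by (simp add: hard_rewards_def)

lemma prob_space_hard_rewards: "prob_space (hard_rewards w p j)"
  by (cases "j = Suc w")
    (simp_all add: hard_rewards_last hard_rewards_certain prob_space_bernoulli_reward
      prob_space_return)

lemma sets_hard_rewards: "sets (hard_rewards w p j) = sets borel"
  by (cases "j = Suc w") (simp_all add: hard_rewards_last hard_rewards_certain sets_bernoulli_reward)

lemma AE_hard_rewards_certain:
  assumes "j \<noteq> Suc w"
  shows "AE y in hard_rewards w p j. y = certain_reward j"
  unfolding hard_rewards_certain[OF assms] by (rule AE_return[THEN iffD2]) auto

lemma AE_hard_rewards_nonneg:
  assumes "0 \<le> p"
  shows "AE y in hard_rewards w p j. 0 \<le> y"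
proof (cases "j = Suc w")
  case True
  show ?thesis
    using AE_bernoulli_reward[where p = p and M = "1 / p"] assms
    unfolding True hard_rewards_last by (auto elim!: eventually_mono)
next
  case False
  then show ?thesis
    using AE_hard_rewards_certain[OF False, of p] by (auto simp: certain_reward_def)
qed

context
  fixes n w :: nat and p :: real
  assumes w: "0 < w" "w < n" and p: "0 < p" "p < 1"
begin

private abbreviation "P \<equiv> PiM {1..n} (hard_rewards w p)"

private lemma AE_hard_rewards_vector:
  "AE x in P. (\<forall>j\<in>{1..n} - {Suc w}. x j = certain_reward j) \<and> 0 \<le> x (Suc w)"
proof -
  have "AE x in P. \<forall>j\<in>{1..n} - {Suc w}. x j = certain_reward j"
    by (intro eventually_ball_finite ballI AE_PiM_component prob_space_hard_rewards
        AE_hard_rewards_certain) auto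
  moreover have "AE x in P. 0 \<le> x (Suc w)"
    using w p by (intro AE_PiM_component prob_space_hard_rewards AE_hard_rewards_nonneg) auto
  ultimately show ?thesis by eventually_elim blast
qed

private lemma nn_integral_last_coordinate:
  assumes "g \<in> borel_measurable borel"
  shows "(\<integral>\<^sup>+ x. g (x (Suc w)) \<partial>P) = (\<integral>\<^sup>+ y. g y \<partial>bernoulli_reward p (1 / p))"
  using w assms unfolding hard_rewards_last[of w p, symmetric]
  by (intro nn_integral_PiM_component prob_space_hard_rewards)
    (auto simp: sets_hard_rewards cong: measurable_cong_sets)

private lemma nn_integral_last_reward: "(\<integral>\<^sup>+ x. ennreal (x (Suc w)) \<partial>P) = 1"
proof -
  have "(\<integral>\<^sup>+ x. ennreal (x (Suc w)) \<partial>P) = (\<integral>\<^sup>+ y. ennreal y \<partial>bernoulli_reward p (1 / p))"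
    by (rule nn_integral_last_coordinate) measurable
  also have "\<dots> = ennreal (1 / p) * p"
    using p by (simp add: nn_integral_bernoulli_reward)
  also have "\<dots> = 1"
    using p by (simp flip: ennreal_mult)
  finally show ?thesis .
qed

private lemma nn_integral_max_one_bernoulli_reward:
  "(\<integral>\<^sup>+ y. ennreal (max 1 y) \<partial>bernoulli_reward p (1 / p)) = ennreal (2 - p)"
proof -
  have "ennreal (1 / p) * p = 1"
    using p by (simp flip: ennreal_mult)
  moreover have "ennreal (2 - p) = ennreal 1 + ennreal (1 - p)"
    using p by (subst ennreal_plus[symmetric]) auto
  ultimately show ?thesis
    using p by (simp add: nn_integral_bernoulli_reward)
qed

lemma nn_integral_Max_hard_rewards:
  "(\<integral>\<^sup>+ x. ennreal (Max ((\<lambda>i. x i) ` {1..n})) \<partial>PiM {1..n} (hard_rewards w p)) = ennreal (2 - p)"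
proof -
  have "(\<integral>\<^sup>+ x. ennreal (Max ((\<lambda>i. x i) ` {1..n})) \<partial>P) = (\<integral>\<^sup>+ x. ennreal (max 1 (x (Suc w))) \<partial>P)"
    using AE_hard_rewards_vector
  proof (intro nn_integral_cong_AE, eventually_elim)
    case (elim x)
    have "x j \<le> max 1 (x (Suc w))" if "j \<in> {1..n}" for j
      using elim that by (cases "j = Suc w") (auto simp: certain_reward_def)
    moreover have "x 1 = 1"
      using elim w by (auto simp: certain_reward_def)
    then have "max 1 (x (Suc w)) \<in> {x 1, x (Suc w)}"
      by (simp add: max_def)
    moreover have "{x 1, x (Suc w)} \<subseteq> x ` {1..n}"
      using w by auto
    ultimately have "Max (x ` {1..n}) = max 1 (x (Suc w))"
      by (intro Max_eqI) auto
    then show ?case by simp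
  qed
  also have "\<dots> = (\<integral>\<^sup>+ y. ennreal (max 1 y) \<partial>bernoulli_reward p (1 / p))"
    by (rule nn_integral_last_coordinate) measurable
  also have "\<dots> = ennreal (2 - p)"
    by (rule nn_integral_max_one_bernoulli_reward)
  finally show ?thesis .
qed

lemma hard_rewards_first_neq_last: "hard_rewards w p 1 \<noteq> hard_rewards w p (Suc w)"
proof
  assume eq: "hard_rewards w p 1 = hard_rewards w p (Suc w)"
  have "(\<integral>\<^sup>+ y. ennreal (max 1 y) \<partial>hard_rewards w p 1) = 1"
    using w by (simp add: hard_rewards_certain certain_reward_def nn_integral_return)
  then show False
    using eq p by (simp add: hard_rewards_last nn_integral_max_one_bernoulli_reward)
qed

lemma payoff_le_one_if_stop_early:
  assumes "window_alg n w A" "i \<in> {1..w}" "A i certain_reward \<noteq> None"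
    and "\<forall>j\<in>{1..n} - {Suc w}. x j = certain_reward j"
  shows "payoff n A x \<le> 1"
proof -
  have "A i x = A i certain_reward"
    using assms w by (intro window_alg_nonanticipating[OF assms(1)]) auto
  then obtain j where j: "j \<in> {1..i}" "payoff n A x = x j"
    using window_alg_payoff_early[OF assms(1), of i x] assms(2,3) w by auto
  then have "j \<in> {1..n} - {Suc w}"
    using assms(2) w by auto
  then show ?thesis
    using j assms(4) by (auto simp: certain_reward_def)
qed

lemma payoff_le_last_if_no_early_stop:
  assumes "window_alg n w A" "\<forall>i\<in>{1..w}. A i certain_reward = None"
    and "\<forall>j\<in>{1..n} - {Suc w}. x j = certain_reward j" "0 \<le> x (Suc w)"
  shows "payoff n A x \<le> x (Suc w)"
proof -
  have "A i x = None" if "i \<in> {1..w}" for i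
  proof -
    have "A i x = A i certain_reward"
      using assms that w by (intro window_alg_nonanticipating[OF assms(1)]) auto
    then show ?thesis using assms(2) that by simp
  qed
  then have "payoff n A x = 0 \<or> (\<exists>j\<in>{2..n}. payoff n A x = x j)"
    by (rule window_alg_payoff_late[OF assms(1)])
  moreover have "x j \<le> x (Suc w)" if "j \<in> {2..n}" for j
    using that assms(3,4) by (cases "j = Suc w") (auto simp: certain_reward_def)
  ultimately show ?thesis
    using assms(4) by auto
qed

lemma nn_integral_payoff_hard_rewards_le:
  assumes "window_alg n w A"
  shows "(\<integral>\<^sup>+ x. ennreal (payoff n A x) \<partial>PiM {1..n} (hard_rewards w p)) \<le> 1"
proof (cases "\<exists>i\<in>{1..w}. A i certain_reward \<noteq> None")
  case True
  then obtain i where i: "i \<in> {1..w}" "A i certain_reward \<noteq> None" by blast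
  have "AE x in P. ennreal (payoff n A x) \<le> 1"
    using AE_hard_rewards_vector
    by eventually_elim (simp add: payoff_le_one_if_stop_early[OF assms i])
  then have "(\<integral>\<^sup>+ x. ennreal (payoff n A x) \<partial>P) \<le> (\<integral>\<^sup>+ x. 1 \<partial>P)"
    by (rule nn_integral_mono_AE)
  then show ?thesis
    by (simp add: prob_space.emeasure_space_1 prob_space_PiM prob_space_hard_rewards)
next
  case False
  then have no_early_stop: "\<forall>i\<in>{1..w}. A i certain_reward = None" by blast
  have "AE x in P. ennreal (payoff n A x) \<le> ennreal (x (Suc w))"
    using AE_hard_rewards_vector
    by eventually_elim (simp add: ennreal_leI payoff_le_last_if_no_early_stop[OF assms no_early_stop])
  then have "(\<integral>\<^sup>+ x. ennreal (payoff n A x) \<partial>P) \<le> (\<integral>\<^sup>+ x. ennreal (x (Suc w)) \<partial>P)"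
    by (rule nn_integral_mono_AE)
  then show ?thesis
    using nn_integral_last_reward by simp
qed

end

lemma one_le_half_plus_times_two_minus:
  fixes \<delta> :: real
  assumes "0 < \<delta>"
  shows "1 \<le> (1/2 + \<delta>) * (2 - min (1/2) \<delta>)"
proof (cases "\<delta> \<le> 1/2")
  case True
  have "(1/2 + \<delta>) * (2 - min (1/2) \<delta>) = 1 + 3/2 * \<delta> - \<delta> * \<delta>"
    using True by (simp add: min_absorb2 field_simps)
  moreover have "\<delta> * \<delta> \<le> 1/2 * \<delta>"
    using True assms by (intro mult_right_mono) auto
  ultimately show ?thesis using assms by linarith
next
  case False
  then show ?thesis by simp
qed

theorem proposition3:
  fixes n w :: nat and \<delta> :: real
  assumes "n \<ge> 2" and "1 \<le> w" and "w \<le> n - 1" and "\<delta> > 0"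
  shows "\<exists>D :: nat \<Rightarrow> real measure.
     (\<forall>i\<in>{1..n}. prob_space (D i) \<and> sets (D i) = sets borel \<and> (AE x in D i. 0 \<le> x)) \<and>
     (\<exists>i\<in>{1..n}. \<exists>j\<in>{1..n}. D i \<noteq> D j) \<and>
     0 < (\<integral>\<^sup>+ x. ennreal (Max ((\<lambda>i. x i) ` {1..n})) \<partial>(PiM {1..n} D)) \<and>
     (\<integral>\<^sup>+ x. ennreal (Max ((\<lambda>i. x i) ` {1..n})) \<partial>(PiM {1..n} D)) < \<infinity> \<and>
     (\<forall>A. window_alg n w A \<and>
          (\<forall>i\<in>{1..n}. A i \<in> measurable (PiM {1..n} D) (count_space UNIV)) \<longrightarrow>
          (\<integral>\<^sup>+ x. ennreal (payoff n A x) \<partial>(PiM {1..n} D))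
            \<le> ennreal (1/2 + \<delta>) * (\<integral>\<^sup>+ x. ennreal (Max ((\<lambda>i. x i) ` {1..n})) \<partial>(PiM {1..n} D)))"
proof -
  define p where "p = min (1/2) \<delta>"
  have w: "0 < w" "w < n" and p: "0 < p" "p < 1"
    using assms by (auto simp: p_def)
  have "ennreal 1 \<le> ennreal ((1/2 + \<delta>) * (2 - p))"
    using one_le_half_plus_times_two_minus[OF \<open>\<delta> > 0\<close>] by (simp add: p_def)
  also have "\<dots> = ennreal (1/2 + \<delta>) * ennreal (2 - p)"
    using assms p by (intro ennreal_mult) auto
  finally have "1 \<le> ennreal (1/2 + \<delta>) * ennreal (2 - p)" by simp
  \<comment> \<open>The decision rules need not be measurable: the payoff is bounded almost everywhere.\<close>
  then have "window_alg n w A \<Longrightarrow>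
      (\<integral>\<^sup>+ x. ennreal (payoff n A x) \<partial>PiM {1..n} (hard_rewards w p)) \<le> ennreal (1/2 + \<delta>) * ennreal (2 - p)"
    for A using nn_integral_payoff_hard_rewards_le[OF w p] by (blast intro: order_trans)
  moreover have "\<exists>i\<in>{1..n}. \<exists>j\<in>{1..n}. hard_rewards w p i \<noteq> hard_rewards w p j"
    using hard_rewards_first_neq_last[OF w p] w by force
  ultimately show ?thesis
    using p nn_integral_Max_hard_rewards[OF w p]
    by (intro exI[of _ "hard_rewards w p"])
      (simp add: prob_space_hard_rewards sets_hard_rewards AE_hard_rewards_nonneg)
qed

end
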